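(* Let $m\ge2$ and $t\ge1$, and let $H=K_{1,m}$ with center $v$ and leaves $v_1,\dots,v_m$. Let $T_H=\{v_1,\dots,v_{m-1}\}$ and $(T_H)_t=\{u_i^s: 1\le i\le m-1,\ 0\le s\le t\}$. Then $(T_H)_t$ is both a minimum twin cover and a minimum size determining set of $\mu_t(H)$; in particular $\det(\mu_t(K_{1,m}))=(t+1)(m-1)$.
   Context: All graphs are finite and simple. For a graph $G$ with $V(G)=\{v_1,\dots,v_n\}$ and an integer $t\ge1$, the generalized Mycielskian $\mu_t(G)$ has vertex set $\{u_i^s: 1\le i\le n,\ 0\le s\le t\}\cup\{w\}$, where $u_i^0$ is identified with $v_i$. Its edges are: $u_i^0u_j^0$ for each edge $v_iv_j$ of $G$; $u_i^su_j^{s+1}$ and $u_j^su_i^{s+1}$ for each edge $v_iv_j$ of $G$ and each $0\le s<t$; and $u_i^tw$ for all $1\le i\le n$. A set $S\subseteq V(G)$ is a determining set for $G$ if the only automorphism of $G$ fixing every vertex of $S$ is the identity; $\det(G)$ is the minimum size of a determining set. Two vertices are twins if they have the same open neighborhood. A minimum twin cover of a graph is a subset of its vertices of minimum size that contains at least one vertex from every pair of distinct twin vertices. *)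

theory Defs
  imports Main
begin

definition simple_graph :: "'a set \<Rightarrow> 'a set set \<Rightarrow> bool" where
  "simple_graph V E \<longleftrightarrow> finite V \<and> (\<forall>e\<in>E. \<exists>x y. x \<in> V \<and> y \<in> V \<and> x \<noteq> y \<and> e = {x, y})"

definition automorphism :: "'a set \<times> 'a set set \<Rightarrow> ('a \<Rightarrow> 'a) \<Rightarrow> bool" where
  "automorphism G f \<longleftrightarrow> bij_betw f (fst G) (fst G) \<and>
     (\<forall>x\<in>fst G. \<forall>y\<in>fst G. {x, y} \<in> snd G \<longleftrightarrow> {f x, f y} \<in> snd G)"

definition determining_set :: "'a set \<times> 'a set set \<Rightarrow> 'a set \<Rightarrow> bool" where
  "determining_set G S \<longleftrightarrow> S \<subseteq> fst G \<and>
     (\<forall>f. automorphism G f \<and> (\<forall>x\<in>S. f x = x) \<longrightarrow> (\<forall>x\<in>fst G. f x = x))"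

definition min_determining_set :: "'a set \<times> 'a set set \<Rightarrow> 'a set \<Rightarrow> bool" where
  "min_determining_set G S \<longleftrightarrow> determining_set G S \<and>
     (\<forall>S'. determining_set G S' \<longrightarrow> card S \<le> card S')"

definition det :: "'a set \<times> 'a set set \<Rightarrow> nat" where
  "det G = (LEAST n. \<exists>S. determining_set G S \<and> card S = n)"

definition open_nbhd :: "'a set \<times> 'a set set \<Rightarrow> 'a \<Rightarrow> 'a set" where
  "open_nbhd G x = {y \<in> fst G. {x, y} \<in> snd G}"

definition twins :: "'a set \<times> 'a set set \<Rightarrow> 'a \<Rightarrow> 'a \<Rightarrow> bool" where
  "twins G x y \<longleftrightarrow> x \<in> fst G \<and> y \<in> fst G \<and> x \<noteq> y \<and> open_nbhd G x = open_nbhd G y"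

definition twin_cover :: "'a set \<times> 'a set set \<Rightarrow> 'a set \<Rightarrow> bool" where
  "twin_cover G S \<longleftrightarrow> S \<subseteq> fst G \<and> (\<forall>x y. twins G x y \<longrightarrow> x \<in> S \<or> y \<in> S)"

definition min_twin_cover :: "'a set \<times> 'a set set \<Rightarrow> 'a set \<Rightarrow> bool" where
  "min_twin_cover G S \<longleftrightarrow> twin_cover G S \<and>
     (\<forall>S'. twin_cover G S' \<longrightarrow> card S \<le> card S')"

text \<open>Generalized Mycielskian mu_t(G). Vertex Some (v, s) is u_v^s (with u_v^0 = v),
  and None is the root w.\<close>

definition mycielskian :: "nat \<Rightarrow> 'a set \<times> 'a set set \<Rightarrow> ('a \<times> nat) option set \<times> ('a \<times> nat) option set set" where
  "mycielskian t G =
    ( Some ` (fst G \<times> {0..t}) \<union> {None},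
      {{Some (x, 0), Some (y, 0)} | x y. {x, y} \<in> snd G}
      \<union> {{Some (x, s), Some (y, Suc s)} | x y s. {x, y} \<in> snd G \<and> s < t}
      \<union> {{Some (x, t), None} | x. x \<in> fst G} )"

definition star :: "nat \<Rightarrow> nat set \<times> nat set set" where
  "star m = ({0..m}, {{0, i} | i. i \<in> {1..m}})"

end

(* Two leaves of the star at the same level s are twins in the Mycielskian, and the
   transposition of two twins is an automorphism; so every determining set is a twin cover,
   and a twin cover misses at most one leaf per level, which gives the lower bound
   (t + 1) * (m - 1).  Conversely, an automorphism fixing the leaves 1, ..., m - 1 at all
   levels fixes the root and the copies of the centre, which are told apart by their
   neighbours in leaf column 1 (distinct levels have distinct neighbour levels, and only the
   root sees nothing but level t); it then fixes leaf column m, whose vertices are told apart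
   by their neighbours among the centre copies. *)

theory Submission
  imports Defs "HOL-Combinatorics.Transposition" "HOL-Library.Disjoint_Sets"
begin

lemma twins_adj_iff:
  assumes "twins G x y" "z \<in> fst G"
  shows "{x, z} \<in> snd G \<longleftrightarrow> {y, z} \<in> snd G"
  using assms unfolding twins_def open_nbhd_def by blast

lemma twins_sym: "twins G x y \<Longrightarrow> twins G y x"
  unfolding twins_def by auto

lemma automorphism_transpose_twins:
  assumes "twins G x y"
  shows "automorphism G (Transposition.transpose x y)"
proof -
  let ?\<tau> = "Transposition.transpose x y"
  have V: "x \<in> fst G" "y \<in> fst G" using assms unfolding twins_def by auto
  have adj: "{x, z} \<in> snd G \<longleftrightarrow> {y, z} \<in> snd G" if "z \<in> fst G" for z
    using twins_adj_iff[OF assms that] .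
  have loop: "{x} \<in> snd G \<longleftrightarrow> {y} \<in> snd G"
    using adj[OF V(1)] adj[OF V(2)] by (simp add: insert_commute)
  have "{u, w} \<in> snd G \<longleftrightarrow> {?\<tau> u, ?\<tau> w} \<in> snd G" if "u \<in> fst G" "w \<in> fst G" for u w
  proof (cases "u \<in> {x, y}"; cases "w \<in> {x, y}")
    assume "u \<in> {x, y}" "w \<in> {x, y}"
    then show ?thesis using loop by (auto simp: insert_commute)
  next
    assume "u \<in> {x, y}" "w \<notin> {x, y}"
    then show ?thesis using adj[OF that(2)] by auto
  next
    assume "u \<notin> {x, y}" "w \<in> {x, y}"
    then show ?thesis using adj[OF that(1)] by (auto simp: insert_commute)
  qed simp
  then show ?thesis unfolding automorphism_def using V by simp
qed

lemma determining_set_imp_twin_cover: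
  assumes "determining_set G S"
  shows "twin_cover G S"
  unfolding twin_cover_def
proof (intro conjI allI impI)
  show "S \<subseteq> fst G" using assms unfolding determining_set_def by simp
  fix x y assume tw: "twins G x y"
  show "x \<in> S \<or> y \<in> S"
  proof (rule ccontr)
    assume "\<not> (x \<in> S \<or> y \<in> S)"
    then have "\<forall>z\<in>S. Transposition.transpose x y z = z" by (auto simp: transpose_def)
    then have "Transposition.transpose x y x = x"
      using assms automorphism_transpose_twins[OF tw] tw
      unfolding determining_set_def twins_def by blast
    then show False using tw unfolding twins_def by simp
  qed
qed

lemma card_le_card_twin_cover_Int:
  assumes "twin_cover G S" "finite C" "\<And>x y. x \<in> C \<Longrightarrow> y \<in> C \<Longrightarrow> x \<noteq> y \<Longrightarrow> twins G x y"
  shows "card C \<le> card (C \<inter> S) + 1"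
proof -
  have "x = y" if "x \<in> C - S" "y \<in> C - S" for x y
    using assms that unfolding twin_cover_def by blast
  then have "card (C - S) \<le> Suc 0"
    using assms(2) by (simp add: card_le_Suc0_iff_eq)
  then show ?thesis using card_Int_Diff[OF assms(2), of S] by simp
qed

lemma twin_cover_card_ge:
  assumes S: "twin_cover G S" "finite S"
    and I: "finite I" "disjoint_family_on C I"
    and C: "\<And>i. i \<in> I \<Longrightarrow> finite (C i)"
    and twins: "\<And>i x y. i \<in> I \<Longrightarrow> x \<in> C i \<Longrightarrow> y \<in> C i \<Longrightarrow> x \<noteq> y \<Longrightarrow> twins G x y"
  shows "(\<Sum>i\<in>I. card (C i) - 1) \<le> card S"
proof -
  have "(\<Sum>i\<in>I. card (C i) - 1) \<le> (\<Sum>i\<in>I. card (C i \<inter> S))"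
    by (rule sum_mono) (use card_le_card_twin_cover_Int[OF S(1) C twins] in fastforce)
  also have "\<dots> = card (\<Union>i\<in>I. C i \<inter> S)"
    using I C by (intro card_UN_disjoint[symmetric]) (auto simp: disjoint_family_on_def)
  also have "\<dots> \<le> card S"
    using S(2) by (intro card_mono) auto
  finally show ?thesis .
qed

lemma automorphism_fixes_distinguished:
  assumes f: "automorphism G f"
    and A: "A \<subseteq> fst G" "\<forall>a\<in>A. f a = a" and B: "\<forall>b\<in>B. f b = b"
    and x: "x \<in> fst G"
    and distinguished: "\<And>y. y \<in> fst G \<Longrightarrow> (\<forall>a\<in>A. {y, a} \<in> snd G \<longleftrightarrow> {x, a} \<in> snd G) \<Longrightarrow> y = x \<or> y \<in> B"
  shows "f x = x"
proof -
  have bij: "bij_betw f (fst G) (fst G)"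
    and edges: "\<And>u w. u \<in> fst G \<Longrightarrow> w \<in> fst G \<Longrightarrow> {u, w} \<in> snd G \<longleftrightarrow> {f u, f w} \<in> snd G"
    using f unfolding automorphism_def by auto
  have fx: "f x \<in> fst G" using bij x by (rule bij_betw_apply)
  have "\<forall>a\<in>A. {f x, a} \<in> snd G \<longleftrightarrow> {x, a} \<in> snd G"
    using edges[OF x] A by fastforce
  then consider "f x = x" | "f x \<in> B" using distinguished[OF fx] by blast
  then show ?thesis
  proof cases
    case 2
    then have "f (f x) = f x" using B by blast
    then show ?thesis using bij_betw_imp_inj_on[OF bij] fx x by (simp add: inj_on_eq_iff)
  qed
qed

lemma det_eq_card_min_determining_set:
  assumes "min_determining_set G S"
  shows "det G = card S"
  unfolding det_def
  by (rule Least_equality) (use assms in \<open>auto simp: min_determining_set_def\<close>)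

definition level_adj :: "nat \<Rightarrow> nat \<Rightarrow> nat \<Rightarrow> bool" where
  "level_adj t s r \<longleftrightarrow> (s = 0 \<and> r = 0) \<or> (r = Suc s \<and> s < t) \<or> (s = Suc r \<and> r < t)"

lemma level_adj_sym: "level_adj t s r \<longleftrightarrow> level_adj t r s"
  unfolding level_adj_def by auto

lemma level_adj_below_top:
  assumes "1 \<le> t" "s \<le> t"
  shows "\<exists>r<t. level_adj t s r"
  using assms unfolding level_adj_def by (intro exI[of _ "s - 1"]) auto

lemma level_adj_inj:
  assumes "s \<le> t" "q \<le> t" "\<And>r. r \<le> t \<Longrightarrow> level_adj t s r \<longleftrightarrow> level_adj t q r"
  shows "s = q"
proof (rule ccontr)
  assume "s \<noteq> q"
  then obtain a b where ab: "a < b" "b \<le> t" "\<And>r. r \<le> t \<Longrightarrow> level_adj t a r \<longleftrightarrow> level_adj t b r"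
    using assms by (metis linorder_neqE_nat)
  have "level_adj t b (Suc a)" using ab(1,2) ab(3)[of "Suc a"] unfolding level_adj_def by auto
  then have "b = Suc (Suc a)" using ab(1) unfolding level_adj_def by auto
  moreover have "level_adj t b (a - 1)"
    using ab(1,2) ab(3)[of "a - 1"] unfolding level_adj_def by (cases a) auto
  ultimately show False unfolding level_adj_def by auto
qed

lemma fst_mycielskian: "fst (mycielskian t G) = Some ` (fst G \<times> {0..t}) \<union> {None}"
  unfolding mycielskian_def by simp

lemma mycielskian_edge_Some_Some:
  "{Some (x, s), Some (y, r)} \<in> snd (mycielskian t G) \<longleftrightarrow> {x, y} \<in> snd G \<and> level_adj t s r"
  unfolding mycielskian_def level_adj_def by (auto simp: doubleton_eq_iff insert_commute)

lemma mycielskian_edge_None_Some: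
  "{None, Some (x, s)} \<in> snd (mycielskian t G) \<longleftrightarrow> x \<in> fst G \<and> s = t"
  unfolding mycielskian_def by (auto simp: doubleton_eq_iff)

lemma fst_star: "fst (star m) = {0..m}"
  unfolding star_def by simp

lemma star_edge: "{x, y} \<in> snd (star m) \<longleftrightarrow> (x = 0 \<and> y \<in> {1..m}) \<or> (y = 0 \<and> x \<in> {1..m})"
  unfolding star_def by (auto simp: doubleton_eq_iff)

lemma mycielskian_star_adj_leaf:
  assumes "i \<in> {1..m}"
  shows "{v, Some (i, r)} \<in> snd (mycielskian t (star m)) \<longleftrightarrow>
           (v = None \<and> r = t) \<or> (\<exists>s. v = Some (0, s) \<and> level_adj t s r)"
  using assms
  by (cases v) (auto simp: mycielskian_edge_None_Some mycielskian_edge_Some_Some star_edge fst_star)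

lemma mycielskian_star_leaf_twins:
  assumes "i \<in> {1..m}" "j \<in> {1..m}" "i \<noteq> j" "s \<le> t"
  shows "twins (mycielskian t (star m)) (Some (i, s)) (Some (j, s))"
proof -
  have "{Some (i, s), v} \<in> snd (mycielskian t (star m)) \<longleftrightarrow> {Some (j, s), v} \<in> snd (mycielskian t (star m))" for v
    unfolding insert_commute[of _ v] mycielskian_star_adj_leaf[OF assms(1)] mycielskian_star_adj_leaf[OF assms(2)] ..
  then show ?thesis
    using assms unfolding twins_def open_nbhd_def by (auto simp: fst_mycielskian fst_star)
qed

definition star_hub :: "nat \<Rightarrow> (nat \<times> nat) option set" where
  "star_hub t = insert None (Some ` ({0} \<times> {0..t}))"

lemma mycielskian_star_vertex_cases:
  assumes "v \<in> fst (mycielskian t (star m))"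
  obtains "v \<in> star_hub t" | "v \<in> Some ` ({1..m-1} \<times> {0..t})" | s where "s \<le> t" "v = Some (m, s)"
proof -
  consider "v = None" | i s where "i \<le> m" "s \<le> t" "v = Some (i, s)"
    using assms by (auto simp: fst_mycielskian fst_star)
  then show thesis
  proof cases
    case 1
    then show thesis by (intro that(1)) (simp add: star_hub_def)
  next
    case (2 i s)
    then consider "i = 0" | "i \<in> {1..m-1}" | "i = m" by fastforce
    then show thesis
    proof cases
      case 1
      then show thesis using 2 by (intro that(1)) (simp add: star_hub_def)
    next
      case 2
      then show thesis using \<open>s \<le> t\<close> \<open>v = Some (i, s)\<close> by (intro that(2)) auto
    next
      case 3
      then show thesis using \<open>s \<le> t\<close> \<open>v = Some (i, s)\<close> by (intro that(3)) auto
    qed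
  qed
qed

lemma star_hub_cases:
  assumes "v \<in> star_hub t"
  obtains "v = None" | s where "s \<le> t" "v = Some (0, s)"
  using assms unfolding star_hub_def by auto

lemma mycielskian_star_hub_adj_inj:
  assumes "1 \<le> m" "1 \<le> t" "x \<in> star_hub t" "y \<in> star_hub t"
    and same_adj: "\<And>r. r \<le> t \<Longrightarrow>
            {x, Some (1, r)} \<in> snd (mycielskian t (star m)) \<longleftrightarrow> {y, Some (1, r)} \<in> snd (mycielskian t (star m))"
  shows "x = y"
proof -
  have adj_root: "{None, Some (1, r)} \<in> snd (mycielskian t (star m)) \<longleftrightarrow> r = t" for r
    using mycielskian_star_adj_leaf[of 1 m] assms(1) by simp
  have adj_centre: "{Some (0, s), Some (1, r)} \<in> snd (mycielskian t (star m)) \<longleftrightarrow> level_adj t s r" for s r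
    using mycielskian_star_adj_leaf[of 1 m] assms(1) by simp
  show ?thesis
  proof (cases rule: star_hub_cases[OF assms(3)]; cases rule: star_hub_cases[OF assms(4)])
    fix q assume xy: "x = None" "q \<le> t" "y = Some (0, q)"
    obtain r where "r < t" "level_adj t q r" using level_adj_below_top[OF assms(2) xy(2)] by blast
    then have "{y, Some (1, r)} \<in> snd (mycielskian t (star m))" using xy(3) adj_centre by blast
    moreover have "{x, Some (1, r)} \<notin> snd (mycielskian t (star m))" using xy(1) adj_root \<open>r < t\<close> by simp
    ultimately show ?thesis using same_adj[of r] \<open>r < t\<close> by auto
  next
    fix s assume xy: "s \<le> t" "x = Some (0, s)" "y = None"
    obtain r where "r < t" "level_adj t s r" using level_adj_below_top[OF assms(2) xy(1)] by blast
    then have "{x, Some (1, r)} \<in> snd (mycielskian t (star m))" using xy(2) adj_centre by blast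
    moreover have "{y, Some (1, r)} \<notin> snd (mycielskian t (star m))" using xy(3) adj_root \<open>r < t\<close> by simp
    ultimately show ?thesis using same_adj[of r] \<open>r < t\<close> by auto
  next
    fix s q assume xy: "s \<le> t" "x = Some (0, s)" "q \<le> t" "y = Some (0, q)"
    have "level_adj t s r \<longleftrightarrow> level_adj t q r" if "r \<le> t" for r
      using same_adj[OF that] adj_centre[of s r] adj_centre[of q r] xy(2,4) by blast
    then have "s = q" by (rule level_adj_inj[OF xy(1,3)])
    with xy show ?thesis by simp
  qed simp
qed

lemma mycielskian_star_hub_determined:
  assumes "1 \<le> m" "1 \<le> t" "x \<in> star_hub t" "y \<in> fst (mycielskian t (star m))"
    and same_adj: "\<forall>a\<in>Some ` ({1} \<times> {0..t}).
            {y, a} \<in> snd (mycielskian t (star m)) \<longleftrightarrow> {x, a} \<in> snd (mycielskian t (star m))"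
  shows "y = x"
proof -
  have same: "{y, Some (1, r)} \<in> snd (mycielskian t (star m)) \<longleftrightarrow> {x, Some (1, r)} \<in> snd (mycielskian t (star m))"
    if "r \<le> t" for r
    using same_adj that by auto
  have "y \<in> star_hub t"
  proof (rule ccontr)
    assume "y \<notin> star_hub t"
    then have "{y, Some (1, r)} \<notin> snd (mycielskian t (star m))" for r
      using mycielskian_star_adj_leaf[of 1 m] assms(1,4) unfolding star_hub_def
      by (auto simp: fst_mycielskian fst_star)
    moreover obtain r where "r \<le> t" "{x, Some (1, r)} \<in> snd (mycielskian t (star m))"
    proof (cases rule: star_hub_cases[OF assms(3)])
      case (2 s)
      then obtain r where "r < t" "level_adj t s r" using level_adj_below_top[OF assms(2)] by blast
      then show thesis using 2 mycielskian_star_adj_leaf[of 1 m] assms(1) by (intro that[of r]) auto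
    qed (use that mycielskian_star_adj_leaf[of 1 m] assms(1) in simp)
    ultimately show False using same by blast
  qed
  then show ?thesis using mycielskian_star_hub_adj_inj[OF assms(1,2) \<open>y \<in> star_hub t\<close> assms(3)] same by blast
qed

lemma mycielskian_star_leaf_level_determined:
  assumes "i \<in> {1..m}" "j \<in> {1..m}" "s \<le> t" "q \<le> t"
    and same_adj: "\<forall>a\<in>Some ` ({0} \<times> {0..t}).
            {Some (j, q), a} \<in> snd (mycielskian t (star m)) \<longleftrightarrow> {Some (i, s), a} \<in> snd (mycielskian t (star m))"
  shows "q = s"
proof (rule level_adj_inj[OF assms(4,3)])
  fix r assume "r \<le> t"
  have adj: "{Some (k, p), Some (0, r)} \<in> snd (mycielskian t (star m)) \<longleftrightarrow> level_adj t p r"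
    if "k \<in> {1..m}" for k p
    using mycielskian_star_adj_leaf[OF that, of "Some (0, r)"] by (simp add: insert_commute level_adj_sym)
  have "{Some (j, q), Some (0, r)} \<in> snd (mycielskian t (star m)) \<longleftrightarrow>
        {Some (i, s), Some (0, r)} \<in> snd (mycielskian t (star m))"
    using same_adj \<open>r \<le> t\<close> by auto
  then show "level_adj t q r \<longleftrightarrow> level_adj t s r"
    by (simp only: adj[OF assms(1)] adj[OF assms(2)])
qed

lemma mycielskian_star_twin_cover:
  assumes "1 \<le> m" "1 \<le> t"
  shows "twin_cover (mycielskian t (star m)) (Some ` ({1..m-1} \<times> {0..t}))"
  unfolding twin_cover_def
proof (intro conjI allI impI)
  let ?G = "mycielskian t (star m)" and ?S = "Some ` ({1..m-1} \<times> {0..t})"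
  show "?S \<subseteq> fst ?G" by (auto simp: fst_mycielskian fst_star)
  have same_adj: "\<forall>a\<in>Some ` ({i} \<times> {0..t}). {w, a} \<in> snd ?G \<longleftrightarrow> {v, a} \<in> snd ?G"
    if "twins ?G v w" "i \<le> m" for i v w
    using twins_adj_iff[OF that(1)] that(2) by (auto simp: fst_mycielskian fst_star)
  have not_hub: "v \<notin> star_hub t" if tw: "twins ?G v w" for v w
  proof
    assume "v \<in> star_hub t"
    moreover have "w \<in> fst ?G" "v \<noteq> w" using tw unfolding twins_def by auto
    ultimately show False
      using mycielskian_star_hub_determined[OF assms] same_adj[OF tw assms(1)] by blast
  qed
  fix x y assume tw: "twins ?G x y"
  then have V: "x \<in> fst ?G" "y \<in> fst ?G" and "x \<noteq> y" unfolding twins_def by auto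
  show "x \<in> ?S \<or> y \<in> ?S"
  proof (rule ccontr)
    assume "\<not> (x \<in> ?S \<or> y \<in> ?S)"
    moreover note not_hub[OF tw] not_hub[OF twins_sym[OF tw]]
    ultimately obtain s q where "s \<le> t" "x = Some (m, s)" "q \<le> t" "y = Some (m, q)"
      using mycielskian_star_vertex_cases[OF V(1)] mycielskian_star_vertex_cases[OF V(2)] by metis
    moreover have "q = s"
      using calculation assms(1) same_adj[OF tw, of 0]
      by (intro mycielskian_star_leaf_level_determined[of m m]) auto
    ultimately show False using \<open>x \<noteq> y\<close> by simp
  qed
qed

lemma mycielskian_star_determining_set:
  assumes "2 \<le> m" "1 \<le> t"
  shows "determining_set (mycielskian t (star m)) (Some ` ({1..m-1} \<times> {0..t}))"
  unfolding determining_set_def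
proof (intro conjI allI impI)
  let ?G = "mycielskian t (star m)" and ?S = "Some ` ({1..m-1} \<times> {0..t})"
  have m: "1 \<le> m" using assms(1) by simp
  show "?S \<subseteq> fst ?G" by (auto simp: fst_mycielskian fst_star)
  fix f assume "automorphism ?G f \<and> (\<forall>x\<in>?S. f x = x)"
  then have f: "automorphism ?G f" and fix_S: "\<forall>x\<in>?S. f x = x" by auto
  have hub_V: "star_hub t \<subseteq> fst ?G"
    by (auto simp: star_hub_def fst_mycielskian fst_star)
  have fix_hub: "\<forall>x\<in>star_hub t. f x = x"
  proof
    fix x assume x: "x \<in> star_hub t"
    show "f x = x"
    proof (rule automorphism_fixes_distinguished[OF f, where A = "Some ` ({1} \<times> {0..t})" and B = "{}"])
      show "Some ` ({1} \<times> {0..t}) \<subseteq> fst ?G" using m by (auto simp: fst_mycielskian fst_star)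
      show "\<forall>a\<in>Some ` ({1} \<times> {0..t}). f a = a" using fix_S assms(1) by auto
    qed (use x hub_V mycielskian_star_hub_determined[OF m assms(2) x] in auto)
  qed
  have fix_last_column: "f (Some (m, s)) = Some (m, s)" if s: "s \<le> t" for s
  proof (rule automorphism_fixes_distinguished[OF f, where A = "Some ` ({0} \<times> {0..t})" and B = "star_hub t \<union> ?S"])
    show "Some ` ({0} \<times> {0..t}) \<subseteq> fst ?G" by (auto simp: fst_mycielskian fst_star)
    show "\<forall>a\<in>Some ` ({0} \<times> {0..t}). f a = a" using fix_hub by (auto simp: star_hub_def)
    show "\<forall>b\<in>star_hub t \<union> ?S. f b = b" using fix_hub fix_S by blast
    show "Some (m, s) \<in> fst ?G" using s by (auto simp: fst_mycielskian fst_star)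
  next
    fix y assume y: "y \<in> fst ?G"
      and same_adj: "\<forall>a\<in>Some ` ({0} \<times> {0..t}). {y, a} \<in> snd ?G \<longleftrightarrow> {Some (m, s), a} \<in> snd ?G"
    show "y = Some (m, s) \<or> y \<in> star_hub t \<union> ?S"
    proof (cases rule: mycielskian_star_vertex_cases[OF y])
      case (3 q)
      then have "q = s" using same_adj s m by (intro mycielskian_star_leaf_level_determined[of m m]) auto
      then show ?thesis using 3 by simp
    qed auto
  qed
  show "\<forall>x\<in>fst ?G. f x = x"
  proof
    fix x assume "x \<in> fst ?G"
    then show "f x = x"
      by (cases rule: mycielskian_star_vertex_cases) (use fix_hub fix_S fix_last_column in auto)
  qed
qed

lemma mycielskian_star_twin_cover_card_ge:
  assumes "twin_cover (mycielskian t (star m)) S"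
  shows "(t + 1) * (m - 1) \<le> card S"
proof -
  let ?G = "mycielskian t (star m)" and ?level = "\<lambda>s. Some ` ({1..m} \<times> {s})"
  have "finite S"
    using assms finite_subset unfolding twin_cover_def by (auto simp: fst_mycielskian fst_star)
  have "(\<Sum>s\<in>{0..t}. card (?level s) - 1) \<le> card S"
  proof (rule twin_cover_card_ge[OF assms \<open>finite S\<close>])
    show "disjoint_family_on ?level {0..t}" by (auto simp: disjoint_family_on_def)
  next
    fix s x y assume "s \<in> {0..t}" "x \<in> ?level s" "y \<in> ?level s" "x \<noteq> y"
    then obtain i j where "i \<in> {1..m}" "j \<in> {1..m}" "i \<noteq> j" "x = Some (i, s)" "y = Some (j, s)"
      by blast
    then show "twins ?G x y" using mycielskian_star_leaf_twins \<open>s \<in> {0..t}\<close> by simp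
  qed auto
  moreover have "(\<Sum>s\<in>{0..t}. card (?level s) - 1) = (t + 1) * (m - 1)"
    by (simp add: card_image card_cartesian_product)
  ultimately show ?thesis by simp
qed

theorem mainTheorem11:
  fixes m t :: nat
  assumes "m \<ge> 2" and "t \<ge> 1"
  shows "min_twin_cover (mycielskian t (star m)) (Some ` ({1..m-1} \<times> {0..t}))
       \<and> min_determining_set (mycielskian t (star m)) (Some ` ({1..m-1} \<times> {0..t}))
       \<and> det (mycielskian t (star m)) = (t + 1) * (m - 1)"
proof -
  let ?G = "mycielskian t (star m)" and ?S = "Some ` ({1..m-1} \<times> {0..t})"
  have card_S: "card ?S = (t + 1) * (m - 1)"
    by (simp add: card_image card_cartesian_product)
  have lower_bound: "card ?S \<le> card S'" if "twin_cover ?G S'" for S'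
    unfolding card_S using that by (rule mycielskian_star_twin_cover_card_ge)
  have min_tc: "min_twin_cover ?G ?S"
    unfolding min_twin_cover_def
    using mycielskian_star_twin_cover assms lower_bound by simp
  have min_det: "min_determining_set ?G ?S"
    unfolding min_determining_set_def
    using mycielskian_star_determining_set[OF assms] determining_set_imp_twin_cover lower_bound by blast
  show ?thesis
    using min_tc min_det det_eq_card_min_determining_set[OF min_det] card_S by simp
qed

end
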